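(* For integers $n\ge k\ge 0$ define the Salié coefficients $s(n,k)$ by the bivariate generating function $$\sum_{n,k\ge 0}\frac{x^{2n}}{(2n)!}\,s(n,k)\,y^{k}=\frac{\cosh\!\left(\tfrac12 x\sqrt{1+4y}\right)}{\cosh\!\left(\tfrac12 x\right)},$$ and set $\epsilon(n,k)=|s(n,k)|/4^{k}$. For a positive integer $N$, let $M_E$ be the $N\times N$ lower triangular matrix with entries $(M_E)_{m,n}=(-1)^{m-n}4^{m}\binom{m}{2(m-n)}$ for $1\le n\le m\le N$ (and $0$ for $n>m$). Then $s(n,k)=(-1)^{n-k}|s(n,k)|$ for all $n\ge k\ge 1$, the matrix $M_E$ is invertible with $(M_E^{-1})_{n,k}=\epsilon(n,k)$ for $1\le k\le n\le N$, and for every $n\ge1$ $$|E_{2n}(1/2)|=(-1)^{n}E_{2n}(1/2)=\sum_{k=1}^{n}\epsilon(n,k).$$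
   Context: $E_m(x)$ denotes the Euler polynomials, defined by $\frac{2e^{xt}}{e^{t}+1}=\sum_{m\ge0}E_m(x)\frac{t^m}{m!}$. Equivalently, the column vector $\vec E$ with entries $|E_{2n}(1/2)|$, $n=1,\dots,N$, satisfies $M_E\vec E=\vec 1$ (the all-ones column). *)

theory Defs
  imports "HOL-Analysis.Analysis" "Jordan_Normal_Form.Matrix"
begin

text \<open>The N x N lower triangular matrix M_E, with paper indices 1..N stored at
  0-based positions: entry (m,n) of the paper is stored at (m-1,n-1).\<close>
definition ME :: "nat \<Rightarrow> real mat" where
  "ME N = mat N N (\<lambda>(i, j). let m = i + 1; n = j + 1 in
      if n \<le> m then (-1) ^ (m - n) * 4 ^ m * real (m choose (2 * (m - n))) else 0)"

end

theory Submission
  imports Defs "Jordan_Normal_Form.Determinant" "HOL-Analysis.FPS_Convergence"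
begin

(* Write P_n(y) = SUM_k s(n,k) y^k and C(x) = cosh(x/2).  The generating function says
   (SUM_n P_n(y) x^(2n)/(2n)!) * C(x) = cosh(x sqrt(1+4y)/2), so comparing coefficients of x^(2n)
   gives the triangular system  SUM_j binom(2n,2j) 4^j P_j(y) = (1+4y)^n,  first for small y and
   then, both sides being polynomials, for all y.  At y = -1/4 the right-hand side is 0^n, and so
   is the one of the same system for E_2j(1/2) in place of P_j(-1/4), because the Euler generating
   function at x = 1/2 is 1/C(t).  Substituting y = w + w^2, so that 1 + 4y = (1+2w)^2, and
   comparing coefficients of w^(2k) shows that the triangular matrix (s(i,k)) is inverse to
   (binom(i, 2(i-k))), which is M_E up to signs and powers of 4.
   For the signs, A = cosh(x sqrt(1+4y)/2)/C(x) satisfies A'' = y A - T A' with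
   T = 2C'/C = tanh(x/2).  By the Riccati equation T' = (1 - T^2)/2 the odd Taylor coefficients
   of T alternate in sign, and the recurrence for P_(n+1) read off from the differential equation
   then preserves the sign pattern (-1)^(n+k) of the coefficients. *)

lemma sum_atMost_double_even:
  fixes g :: "nat \<Rightarrow> 'a :: comm_monoid_add"
  shows "(\<Sum>i\<le>2*n. if even i then g i else 0) = (\<Sum>j\<le>n. g (2*j))"
proof (induction n)
  case (Suc n)
  have "2 * Suc n = Suc (Suc (2*n))" by simp
  then show ?case using Suc by (simp only: sum.atMost_Suc) simp
qed simp

lemma abs_eq_neg_one_power_mult:
  fixes x :: "'a :: linordered_idom"
  assumes "0 \<le> (-1)^n * x"
  shows "\<bar>x\<bar> = (-1)^n * x"
proof -
  have "\<bar>x\<bar> = \<bar>(-1)^n * x\<bar>"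
    by (simp add: abs_mult)
  then show ?thesis using assms by simp
qed

lemma coeff_linear_poly_power_eq:
  fixes a b :: "'a :: comm_semiring_1"
  shows "coeff ([:a, b:]^n) i = (if i \<le> n then of_nat (n choose i) * b^i * a^(n - i) else 0)"
proof (cases "i \<le> n")
  case False
  have "degree ([:a, b:]^n) \<le> degree [:a, b:] * n"
    by (rule degree_power_le)
  also have "\<dots> \<le> n"
    by simp
  finally have "degree ([:a, b:]^n) \<le> n" .
  with False show ?thesis by (simp add: coeff_eq_0)
qed (simp add: coeff_linear_poly_power)

lemma inverts_mat_eq_left_inverse:
  fixes A B C :: "'a :: comm_ring_1 mat"
  assumes "A \<in> carrier_mat n n" "C \<in> carrier_mat n n" "C * A = 1\<^sub>m n"
    and "inverts_mat A B" "inverts_mat B A"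
  shows "B = C"
proof -
  have "dim_row B = n" "dim_col B = n"
    using assms(1,4,5) by (metis carrier_matD index_mult_mat(2,3) index_one_mat(2,3) inverts_mat_def)+
  then have B: "B \<in> carrier_mat n n" by auto
  have "B = (C * A) * B" using B assms(3) by simp
  also have "\<dots> = C * (A * B)" using assms(2,1) B by (rule assoc_mult_mat)
  also have "A * B = 1\<^sub>m n" using assms(1,4) by (simp add: inverts_mat_def)
  finally show ?thesis using assms(2) by simp
qed

section \<open>Real power series\<close>

lemma powser_sums_zero_imp_zero:
  fixes a :: "nat \<Rightarrow> real"
  assumes "d > 0" and sums_zero: "\<And>x. \<bar>x\<bar> < d \<Longrightarrow> (\<lambda>n. a n * x^n) sums 0"
  shows "a n = 0"
proof (induction n rule: less_induct)
  case (less n)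
  have tail: "(\<lambda>i. a (i+n) * x^i) sums 0" if x: "x \<noteq> 0" "norm x < d" for x
  proof -
    have "(\<Sum>i<n. a i * x^i) = 0" using less by auto
    with sums_zero[of x] x have "(\<lambda>i. a (i+n) * x^(i+n)) sums 0"
      using sums_iff_shift[of "\<lambda>i. a i * x^i" n 0] by simp
    then have "(\<lambda>i. a (i+n) * x^(i+n) / x^n) sums 0"
      using sums_divide by fastforce
    then show ?thesis using x by (simp add: power_add)
  qed
  have "((\<lambda>x::real. 0::real) \<longlongrightarrow> a n) (at 0)"
    using powser_limit_0_strong[where a="\<lambda>i. a (i+n)", OF \<open>d > 0\<close>] tail by simp
  then show ?case
    using LIM_unique[OF _ tendsto_const[of 0 "at (0::real)"]] by auto
qed

lemma fps_eq_if_sums_eq: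
  fixes f g :: "real fps"
  assumes "d > 0"
    and "\<And>x. \<bar>x\<bar> < d \<Longrightarrow> (\<lambda>n. fps_nth f n * x^n) sums v x"
    and "\<And>x. \<bar>x\<bar> < d \<Longrightarrow> (\<lambda>n. fps_nth g n * x^n) sums v x"
  shows "f = g"
proof (rule fps_ext)
  fix n
  have "fps_nth (f - g) n = 0"
  proof (rule powser_sums_zero_imp_zero[OF \<open>d > 0\<close>])
    fix x :: real assume "\<bar>x\<bar> < d"
    from sums_diff[OF assms(2)[OF this] assms(3)[OF this]]
    show "(\<lambda>n. fps_nth (f - g) n * x^n) sums 0" by (simp add: algebra_simps)
  qed
  then show "fps_nth f n = fps_nth g n" by simp
qed

lemma fps_conv_radius_gt_if_summable:
  fixes f :: "real fps"
  assumes "\<And>z. \<bar>z\<bar> < d \<Longrightarrow> summable (\<lambda>n. fps_nth f n * z^n)" and "\<bar>x\<bar> < d"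
  shows "ereal (norm x) < fps_conv_radius f"
proof -
  let ?z = "(\<bar>x\<bar> + d) / 2"
  have "ereal (norm ?z) \<le> fps_conv_radius f"
    unfolding fps_conv_radius_def using assms by (intro conv_radius_geI) auto
  moreover have "ereal (norm x) < ereal (norm ?z)" using assms(2) by auto
  ultimately show ?thesis by order
qed

lemma sums_fps_mult:
  fixes f g :: "real fps"
  assumes f: "\<And>t. \<bar>t\<bar> < d \<Longrightarrow> (\<lambda>n. fps_nth f n * t^n) sums F t"
    and g: "\<And>t. (\<lambda>n. fps_nth g n * t^n) sums G t"
    and "\<bar>t\<bar> < d"
  shows "(\<lambda>n. fps_nth (f * g) n * t^n) sums (F t * G t)"
proof -
  have rf: "ereal (norm t) < fps_conv_radius f"
    using fps_conv_radius_gt_if_summable[of d f t] f \<open>\<bar>t\<bar> < d\<close> sums_summable by fastforce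
  have rg: "ereal (norm t) < fps_conv_radius g"
    using fps_conv_radius_gt_if_summable[of "\<bar>t\<bar> + 1" g t] g sums_summable by fastforce
  have "ereal (norm t) < fps_conv_radius (f * g)"
    using rf rg fps_conv_radius_mult[of f g] by (metis less_le_trans min_less_iff_conj)
  then have "(\<lambda>n. fps_nth (f * g) n * t^n) sums (eval_fps f t * eval_fps g t)"
    using sums_eval_fps eval_fps_mult[OF rf rg] by metis
  moreover have "eval_fps f t = F t" "eval_fps g t = G t"
    using f[OF \<open>\<bar>t\<bar> < d\<close>] g[of t] by (auto simp: eval_fps_def sums_iff)
  ultimately show ?thesis by simp
qed

section \<open>Even binomial transforms and even generating functions\<close>

definition even_binomial_transform :: "(nat \<Rightarrow> real) \<Rightarrow> nat \<Rightarrow> real" where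
  "even_binomial_transform X n = (\<Sum>j\<le>n. real (2*n choose (2*j)) * 4^j * X j)"

lemma even_binomial_transform_inject:
  assumes "\<And>n. even_binomial_transform X n = even_binomial_transform Y n"
  shows "X = Y"
proof
  fix n show "X n = Y n"
  proof (induction n rule: less_induct)
    case (less n)
    have "(\<Sum>j<n. real (2*n choose (2*j)) * 4^j * X j) = (\<Sum>j<n. real (2*n choose (2*j)) * 4^j * Y j)"
      using less by (intro sum.cong) auto
    with assms[of n] have "4^n * X n = 4^n * Y n"
      by (simp add: even_binomial_transform_def lessThan_Suc_atMost[symmetric])
    then show ?case by simp
  qed
qed

lemma even_binomial_transform_delta:
  "even_binomial_transform (\<lambda>j. if j = k then 1 else 0) n =
     (if k \<le> n then real (2*n choose (2*k)) * 4^k else 0)"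
proof -
  have "(\<Sum>j\<le>n. real (2*n choose (2*j)) * 4^j * (if j = k then 1 else 0)) =
      (\<Sum>j\<le>n. if j = k then real (2*n choose (2*k)) * 4^k else 0)"
    by (rule sum.cong) auto
  then show ?thesis by (simp add: even_binomial_transform_def)
qed

definition even_egf :: "(nat \<Rightarrow> real) \<Rightarrow> real fps" where
  "even_egf Q = Abs_fps (\<lambda>m. if even m then Q (m div 2) / fact m else 0)"

definition cosh_fps :: "real \<Rightarrow> real fps" where
  "cosh_fps c = even_egf (\<lambda>n. c^(2*n))"

lemma fps_nth_even_egf: "fps_nth (even_egf Q) m = (if even m then Q (m div 2) / fact m else 0)"
  by (simp add: even_egf_def)

lemma fps_nth_even_egf_double [simp]: "fps_nth (even_egf Q) (2*n) = Q n / fact (2*n)"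
  by (simp add: even_egf_def)

lemma even_egf_inject: "even_egf Q = even_egf R \<Longrightarrow> Q = R"
  by (metis fps_nth_even_egf_double divide_cancel_right fact_nonzero ext)

lemma even_egf_cmult: "even_egf (\<lambda>n. c * Q n) = fps_const c * even_egf Q"
  by (rule fps_ext) (simp add: fps_nth_even_egf)

lemma fps_deriv_deriv_even_egf: "fps_deriv (fps_deriv (even_egf Q)) = even_egf (\<lambda>n. Q (Suc n))"
proof (rule fps_ext)
  fix m
  have "fact (Suc (Suc m)) = real (Suc (Suc m)) * real (Suc m) * (fact m :: real)"
    by (simp add: fact_Suc del: mult_Suc_right)
  then show "fps_nth (fps_deriv (fps_deriv (even_egf Q))) m = fps_nth (even_egf (\<lambda>n. Q (Suc n))) m"
    by (simp add: fps_nth_even_egf del: of_nat_Suc)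
qed

lemma fps_nth_deriv_even_egf:
  "fps_nth (fps_deriv (even_egf Q)) m = (if odd m then Q (Suc (m div 2)) / fact m else 0)"
  by (simp add: fps_nth_even_egf del: of_nat_Suc)

lemma fps_nth_mult_cosh_half_double:
  "fps_nth (F * cosh_fps (1/2)) (2*n) =
     even_binomial_transform (\<lambda>j. fact (2*j) * fps_nth F (2*j)) n / (4^n * fact (2*n))"
proof -
  have "fps_nth (F * cosh_fps (1/2)) (2*n) = (\<Sum>i\<le>2*n. fps_nth F i * fps_nth (cosh_fps (1/2)) (2*n - i))"
    by (simp add: fps_mult_nth atLeast0AtMost)
  also have "\<dots> = (\<Sum>i\<le>2*n. if even i then fps_nth F i * fps_nth (cosh_fps (1/2)) (2*n - i) else 0)"
    by (intro sum.cong) (auto simp: cosh_fps_def fps_nth_even_egf)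
  also have "\<dots> = (\<Sum>j\<le>n. fps_nth F (2*j) * ((1/2)^(2*(n-j)) / fact (2*(n-j))))"
    by (subst sum_atMost_double_even) (simp add: cosh_fps_def flip: diff_mult_distrib2)
  also have "\<dots> = (\<Sum>j\<le>n. real (2*n choose (2*j)) * 4^j * (fact (2*j) * fps_nth F (2*j)) / (4^n * fact (2*n)))"
  proof (intro sum.cong refl)
    fix j assume "j \<in> {..n}"
    then have "(4::real)^n = 4^j * 4^(n - j)"
      by (simp flip: power_add)
    moreover have "(1/2::real)^(2*(n - j)) = 1 / 4^(n - j)"
      by (simp add: power_mult power_one_over)
    moreover have "real (2*n choose (2*j)) = fact (2*n) / (fact (2*j) * fact (2*(n - j)))"
      using \<open>j \<in> {..n}\<close> by (simp add: binomial_fact diff_mult_distrib2)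
    ultimately show "fps_nth F (2*j) * ((1/2)^(2*(n - j)) / fact (2*(n - j))) =
        real (2*n choose (2*j)) * 4^j * (fact (2*j) * fps_nth F (2*j)) / (4^n * fact (2*n))"
      by (simp add: field_simps)
  qed
  finally show ?thesis by (simp add: even_binomial_transform_def sum_divide_distrib)
qed

lemma even_egf_mult_cosh_half:
  "even_egf Q * cosh_fps (1/2) = even_egf (\<lambda>n. even_binomial_transform Q n / 4^n)"
proof (rule fps_ext)
  fix m
  show "fps_nth (even_egf Q * cosh_fps (1/2)) m = fps_nth (even_egf (\<lambda>n. even_binomial_transform Q n / 4^n)) m"
  proof (cases "even m")
    case True
    then obtain n where "m = 2*n" by blast
    then show ?thesis by (simp add: fps_nth_mult_cosh_half_double)
  next
    case False
    have "fps_nth (even_egf Q) i * fps_nth (cosh_fps (1/2)) (m - i) = 0" if "i \<le> m" for i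
      using False that by (auto simp: cosh_fps_def fps_nth_even_egf)
    then have "fps_nth (even_egf Q * cosh_fps (1/2)) m = 0"
      unfolding fps_mult_nth by (intro sum.neutral) auto
    then show ?thesis using False by (simp add: fps_nth_even_egf)
  qed
qed

lemma sums_cosh_fps: "(\<lambda>m. fps_nth (cosh_fps c) m * x^m) sums cosh (c*x)"
proof -
  have "(\<lambda>m. ((c*x)^m /\<^sub>R fact m + (-(c*x))^m /\<^sub>R fact m) / 2) sums ((exp (c*x) + exp (-(c*x))) / 2)"
    by (intro sums_divide sums_add exp_converges)
  moreover have "((c*x)^m /\<^sub>R fact m + (-(c*x))^m /\<^sub>R fact m) / 2 = fps_nth (cosh_fps c) m * x^m" for m
  proof (cases "even m")
    case True
    then have "2 * (m div 2) = m" by simp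
    then show ?thesis using True by (simp add: cosh_fps_def fps_nth_even_egf power_mult_distrib field_simps)
  qed (simp add: cosh_fps_def fps_nth_even_egf)
  ultimately show ?thesis by (simp add: cosh_def)
qed

lemma fps_nth_cosh_fps_0 [simp]: "fps_nth (cosh_fps c) 0 = 1"
  by (simp add: cosh_fps_def fps_nth_even_egf)

lemma cosh_fps_nonzero: "cosh_fps c \<noteq> 0"
  by (metis fps_nth_cosh_fps_0 fps_zero_nth zero_neq_one)

lemma fps_deriv_deriv_cosh_fps: "fps_deriv (fps_deriv (cosh_fps c)) = fps_const (c^2) * cosh_fps c"
  by (simp add: cosh_fps_def fps_deriv_deriv_even_egf power_add power_mult flip: even_egf_cmult)

lemma euler_even_binomial_identity:
  fixes e :: "nat \<Rightarrow> real"
  assumes "d > 0"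
    and euler: "\<And>t. \<bar>t\<bar> < d \<Longrightarrow> (\<lambda>m. e m * t^m / fact m) sums (2 * exp (1/2 * t) / (exp t + 1))"
  shows "even_binomial_transform (\<lambda>j. e (2*j)) n = 0^n"
proof -
  define F where "F = Abs_fps (\<lambda>m. e m / fact m)"
  have F: "(\<lambda>m. fps_nth F m * t^m) sums (2 * exp (1/2 * t) / (exp t + 1))" if "\<bar>t\<bar> < d" for t
    using euler[OF that] by (simp add: F_def field_simps)
  have "F * cosh_fps (1/2) = 1"
  proof (rule fps_eq_if_sums_eq[OF \<open>d > 0\<close>])
    fix t :: real assume "\<bar>t\<bar> < d"
    have "2 * exp (t/2) * cosh (t/2) = exp (t/2) * exp (t/2) + exp (t/2) * exp (-(t/2))"
      by (simp add: cosh_def algebra_simps)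
    also have "\<dots> = exp t + 1"
      by (simp flip: exp_add)
    finally have "2 * exp (t/2) * cosh (t/2) = exp t + 1" .
    moreover have "exp t + 1 \<noteq> 0"
      using exp_gt_zero[of t] by linarith
    ultimately have "2 * exp (1/2 * t) / (exp t + 1) * cosh (1/2 * t) = 1"
      by (simp add: field_simps)
    with sums_fps_mult[OF F sums_cosh_fps[of "1/2"] \<open>\<bar>t\<bar> < d\<close>]
    show "(\<lambda>m. fps_nth (F * cosh_fps (1/2)) m * t^m) sums 1" by (simp only:)
  next
    show "(\<lambda>m. fps_nth 1 m * t^m) sums 1" for t :: real
      using powser_sums_if[of 0 t] by (simp add: fps_one_nth)
  qed
  then have "even_binomial_transform (\<lambda>j. fact (2*j) * fps_nth F (2*j)) n / (4^n * fact (2*n)) = 0^n"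
    using fps_nth_mult_cosh_half_double[of F n] by (simp add: power_0_left)
  then show ?thesis by (cases n) (simp_all add: F_def)
qed

section \<open>The Taylor coefficients of \<open>tanh (x/2)\<close>\<close>

definition tanh_half_fps :: "real fps" where
  "tanh_half_fps = 2 * fps_deriv (cosh_fps (1/2)) / cosh_fps (1/2)"

lemma tanh_half_fps_mult_cosh: "tanh_half_fps * cosh_fps (1/2) = 2 * fps_deriv (cosh_fps (1/2))"
  using inverse_mult_eq_1[of "cosh_fps (1/2)"] by (simp add: tanh_half_fps_def fps_divide_unit mult.assoc)

lemma fps_deriv_cosh_half: "fps_deriv (cosh_fps (1/2)) = fps_const (1/2) * tanh_half_fps * cosh_fps (1/2)"
proof -
  have "fps_const (1/2) * tanh_half_fps * cosh_fps (1/2) = fps_const (1/2) * 2 * fps_deriv (cosh_fps (1/2))"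
    by (simp add: mult.assoc tanh_half_fps_mult_cosh)
  also have "fps_const (1/2) * 2 = (1 :: real fps)"
    by (rule fps_ext) (simp add: fps_numeral_nth)
  finally show ?thesis by simp
qed

lemma fps_deriv_tanh_half: "fps_deriv tanh_half_fps = fps_const (1/2) * (1 - tanh_half_fps^2)"
proof -
  let ?C = "cosh_fps (1/2)" and ?T = tanh_half_fps
  have "fps_deriv ?T * ?C + ?T * fps_deriv ?C = 2 * fps_deriv (fps_deriv ?C)"
    using arg_cong[OF tanh_half_fps_mult_cosh, of fps_deriv] by (simp add: add.commute)
  then have "fps_deriv ?T * ?C = 2 * fps_deriv (fps_deriv ?C) - ?T * fps_deriv ?C"
    by (simp add: eq_diff_eq)
  also have "\<dots> = (2 * fps_const (1/4)) * ?C - fps_const (1/2) * ?T^2 * ?C"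
    unfolding fps_deriv_deriv_cosh_fps unfolding fps_deriv_cosh_half by (simp add: power2_eq_square mult_ac)
  also have "2 * fps_const (1/4) = fps_const (1/2 :: real)"
    by (rule fps_ext) (simp add: fps_numeral_nth)
  finally have "fps_deriv ?T * ?C = fps_const (1/2) * (1 - ?T^2) * ?C"
    by (simp add: algebra_simps)
  then show ?thesis using cosh_fps_nonzero by simp
qed

lemma fps_nth_tanh_half_0: "fps_nth tanh_half_fps 0 = 0"
proof -
  have "fps_nth (tanh_half_fps * cosh_fps (1/2)) 0 = 0"
    unfolding tanh_half_fps_mult_cosh by (simp add: cosh_fps_def fps_nth_even_egf)
  then show ?thesis by simp
qed

lemma fps_nth_tanh_half_Suc:
  "real (Suc m) * fps_nth tanh_half_fps (Suc m) =
     ((if m = 0 then 1 else 0) - (\<Sum>i\<le>m. fps_nth tanh_half_fps i * fps_nth tanh_half_fps (m - i))) / 2"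
proof -
  have "fps_nth (tanh_half_fps^2) m = (\<Sum>i\<le>m. fps_nth tanh_half_fps i * fps_nth tanh_half_fps (m - i))"
    by (simp add: power2_eq_square fps_mult_nth atLeast0AtMost)
  then show ?thesis
    using arg_cong[OF fps_deriv_tanh_half, of "\<lambda>f. fps_nth f m"] by simp
qed

lemma fps_nth_tanh_half_even: "fps_nth tanh_half_fps (2*n) = 0"
proof (induction n rule: less_induct)
  case (less n)
  show ?case
  proof (cases n)
    case (Suc k)
    have "fps_nth tanh_half_fps i * fps_nth tanh_half_fps (2*k + 1 - i) = 0" if "i \<in> {..2*k + 1}" for i
    proof (cases "even i")
      case True
      then show ?thesis using less[of "i div 2"] that Suc by (auto elim!: evenE)
    next
      case False
      then have "even (2*k + 1 - i)" using that by presburger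
      then show ?thesis using less[of "(2*k + 1 - i) div 2"] that Suc by (auto elim!: evenE)
    qed
    then have "(\<Sum>i\<le>2*k + 1. fps_nth tanh_half_fps i * fps_nth tanh_half_fps (2*k + 1 - i)) = 0"
      by (rule sum.neutral[OF ballI])
    then show ?thesis
      using fps_nth_tanh_half_Suc[of "2*k + 1"] Suc by (simp del: sum.atMost_Suc)
  qed (simp add: fps_nth_tanh_half_0)
qed

lemma fps_nth_tanh_half_odd_sign: "0 \<le> (-1)^n * fps_nth tanh_half_fps (2*n + 1)"
proof (induction n rule: less_induct)
  case (less n)
  let ?t = "\<lambda>i. fps_nth tanh_half_fps i"
  have term_sign: "(-1)^n * (?t i * ?t (2*n - i)) \<le> 0" if "i \<le> 2*n" for i
  proof (cases "even i")
    case True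
    then show ?thesis using fps_nth_tanh_half_even by (auto elim!: evenE)
  next
    case False
    define a b where "a = i div 2" and "b = (2*n - i) div 2"
    have ab: "i = 2*a + 1" "2*n - i = 2*b + 1" "n = Suc (a + b)"
      using False that unfolding a_def b_def by presburger+
    have "0 \<le> (-1)^a * ?t (2*a + 1)" "0 \<le> (-1)^b * ?t (2*b + 1)"
      using less ab(3) by auto
    then have "0 \<le> ((-1)^a * ?t (2*a + 1)) * ((-1)^b * ?t (2*b + 1))"
      by (rule mult_nonneg_nonneg)
    then show ?thesis using ab by (simp add: power_add mult_ac)
  qed
  have "(-1)^n * (\<Sum>i\<le>2*n. ?t i * ?t (2*n - i)) \<le> 0"
    unfolding sum_distrib_left by (intro sum_nonpos term_sign) auto
  then have "0 \<le> (-1)^n * (real (Suc (2*n)) * ?t (Suc (2*n)))"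
    unfolding fps_nth_tanh_half_Suc by (auto simp: field_simps)
  then have "0 \<le> real (Suc (2*n)) * ((-1)^n * ?t (Suc (2*n)))"
    by (simp only: mult.left_commute)
  then show ?case by (simp add: zero_le_mult_iff)
qed

lemma fps_nth_tanh_half_mult_deriv_even_egf:
  "fps_nth (tanh_half_fps * fps_deriv (even_egf Q)) (2*n) =
     (\<Sum>a<n. fps_nth tanh_half_fps (2*a + 1) * Q (n - a) / fact (2*(n - a) - 1))"
proof -
  let ?t = "fps_nth tanh_half_fps" and ?d = "fps_nth (fps_deriv (even_egf Q))"
  have "fps_nth (tanh_half_fps * fps_deriv (even_egf Q)) (2*n) = (\<Sum>i\<le>2*n. ?t i * ?d (2*n - i))"
    by (simp add: fps_mult_nth atLeast0AtMost)
  also have "\<dots> = (\<Sum>i<2*n. ?t i * ?d (2*n - i))"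
  proof -
    have "{..2*n} = insert (2*n) {..<2*n}" by auto
    then show ?thesis using fps_nth_tanh_half_even[of n] by simp
  qed
  also have "\<dots> = (\<Sum>i<2*n. if even i then 0 else ?t i * ?d (2*n - i))"
    by (intro sum.cong) (auto simp: fps_nth_tanh_half_even elim!: evenE)
  also have "\<dots> = (\<Sum>a<n. ?t (2*a + 1) * ?d (2*n - (2*a + 1)))"
    by (simp add: sum_split_even_odd)
  also have "\<dots> = (\<Sum>a<n. ?t (2*a + 1) * Q (n - a) / fact (2*(n - a) - 1))"
  proof (intro sum.cong refl)
    fix a assume "a \<in> {..<n}"
    then have "a < n" by simp
    have m: "2*n - (2*a + 1) = 2*(n - a) - 1" using \<open>a < n\<close> by simp
    have "odd (2*(n - a) - 1)" using \<open>a < n\<close> by simp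
    moreover have "Suc ((2*(n - a) - 1) div 2) = n - a" using \<open>a < n\<close> by presburger
    ultimately show "?t (2*a + 1) * ?d (2*n - (2*a + 1)) = ?t (2*a + 1) * Q (n - a) / fact (2*(n - a) - 1)"
      by (simp only: m fps_nth_deriv_even_egf not_False_eq_True if_True times_divide_eq_right)
  qed
  finally show ?thesis .
qed

lemma cosh_half_quotient_ode:
  assumes AC: "A * cosh_fps (1/2) = even_egf (\<lambda>n. (y + 1/4)^n)"
  shows "fps_deriv (fps_deriv A) = fps_const y * A - tanh_half_fps * fps_deriv A"
proof -
  let ?C = "cosh_fps (1/2)" and ?T = tanh_half_fps
  have "fps_deriv (fps_deriv (A * ?C)) = even_egf (\<lambda>n. (y + 1/4) * (y + 1/4)^n)"
    unfolding AC fps_deriv_deriv_even_egf by simp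
  also have "\<dots> = fps_const (y + 1/4) * (A * ?C)"
    unfolding even_egf_cmult AC ..
  finally have AC'': "fps_deriv (fps_deriv (A * ?C)) = fps_const (y + 1/4) * (A * ?C)" .
  have Leibniz: "fps_deriv (fps_deriv (A * ?C)) = fps_deriv (fps_deriv A) * ?C
      + (fps_deriv A * fps_deriv ?C + fps_deriv A * fps_deriv ?C) + A * fps_deriv (fps_deriv ?C)"
    by (simp add: algebra_simps)
  have "fps_deriv A * fps_deriv ?C + fps_deriv A * fps_deriv ?C =
      (fps_const (1/2) + fps_const (1/2)) * (fps_deriv A * ?T * ?C)"
    unfolding fps_deriv_cosh_half by (simp only: algebra_simps)
  also have "fps_const (1/2) + fps_const (1/2) = (1 :: real fps)"
    by (simp flip: fps_const_add)
  finally have middle: "fps_deriv A * fps_deriv ?C + fps_deriv A * fps_deriv ?C = fps_deriv A * ?T * ?C"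
    by simp
  have "(fps_deriv (fps_deriv A) - (fps_const y * A - ?T * fps_deriv A)) * ?C
      = fps_deriv (fps_deriv (A * ?C)) - (fps_const y + fps_const (1/4)) * (A * ?C)"
    unfolding Leibniz middle fps_deriv_deriv_cosh_fps by (simp add: algebra_simps power2_eq_square del: fps_const_add)
  also have "\<dots> = 0"
    unfolding AC'' by simp
  finally show ?thesis using cosh_fps_nonzero by simp
qed

section \<open>Salie polynomials\<close>

definition salie_poly :: "(nat \<Rightarrow> nat \<Rightarrow> real) \<Rightarrow> nat \<Rightarrow> real poly" where
  "salie_poly s n = (\<Sum>k\<le>n. monom (s n k) k)"

lemma poly_salie_poly: "poly (salie_poly s n) y = (\<Sum>k\<le>n. s n k * y^k)"
  by (simp add: salie_poly_def poly_sum poly_monom)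

lemma coeff_salie_poly: "coeff (salie_poly s n) k = (if k \<le> n then s n k else 0)"
  by (simp add: salie_poly_def coeff_sum coeff_monom)

lemma sums_even_egf_salie_poly:
  assumes "((\<lambda>(n, k). x^(2*n) / fact (2*n) * s n k * y^k) has_sum S) {(n, k). k \<le> n}"
  shows "(\<lambda>m. fps_nth (even_egf (\<lambda>n. poly (salie_poly s n) y)) m * x^m) sums S"
proof -
  let ?a = "\<lambda>m. fps_nth (even_egf (\<lambda>n. poly (salie_poly s n) y)) m * x^m"
  have Sigma_eq: "Sigma UNIV (\<lambda>n. {..n}) = {(n, k). k \<le> n}" by auto
  have "((\<lambda>(n, k). x^(2*n) / fact (2*n) * s n k * y^k) has_sum S) (Sigma UNIV (\<lambda>n. {..n}))"
    unfolding Sigma_eq by (rule assms)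
  then have "((\<lambda>n. \<Sum>k\<le>n. x^(2*n) / fact (2*n) * s n k * y^k) has_sum S) UNIV"
  proof (rule has_sum_SigmaD)
    fix n :: nat
    show "((\<lambda>k. (\<lambda>(n, k). x^(2*n) / fact (2*n) * s n k * y^k) (n, k)) has_sum
        (\<Sum>k\<le>n. x^(2*n) / fact (2*n) * s n k * y^k)) {..n}"
      using has_sum_finite[of "{..n}" "\<lambda>k. x^(2*n) / fact (2*n) * s n k * y^k"] by simp
  qed
  then have "(\<lambda>n. \<Sum>k\<le>n. x^(2*n) / fact (2*n) * s n k * y^k) sums S"
    by (rule has_sum_imp_sums)
  moreover have "(\<Sum>k\<le>n. x^(2*n) / fact (2*n) * s n k * y^k) = ?a (2*n)" for n
  proof -
    have "?a (2*n) = (\<Sum>k\<le>n. s n k * y^k) / fact (2*n) * x^(2*n)"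
      by (simp add: poly_salie_poly)
    then show ?thesis
      by (simp only:) (simp add: sum_distrib_left sum_distrib_right sum_divide_distrib mult_ac)
  qed
  ultimately have "(\<lambda>n. ?a (2*n)) sums S" by simp
  moreover have "?a m = 0" if "m \<notin> range (\<lambda>n. 2*n)" for m
    using that by (auto simp: fps_nth_even_egf)
  ultimately show ?thesis
    using sums_mono_reindex[of "\<lambda>n. 2*n" ?a] by (simp add: strict_mono_def)
qed

lemma salie_identity_near_zero:
  assumes gf: "\<And>x. \<bar>x\<bar> < \<delta> \<Longrightarrow> ((\<lambda>(n, k). x^(2*n) / fact (2*n) * s n k * y^k) has_sum
         (cosh (x * sqrt (1 + 4*y) / 2) / cosh (x / 2))) {(n, k). k \<le> n}"
    and "\<delta> > 0" and "1 + 4*y \<ge> 0"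
  shows "even_binomial_transform (\<lambda>j. poly (salie_poly s j) y) n = (1 + 4*y)^n"
proof -
  define c where "c = sqrt (1 + 4*y) / 2"
  have "even_egf (\<lambda>n. poly (salie_poly s n) y) * cosh_fps (1/2) = cosh_fps c"
  proof (rule fps_eq_if_sums_eq[OF \<open>\<delta> > 0\<close>])
    fix x :: real assume "\<bar>x\<bar> < \<delta>"
    have "x * sqrt (1 + 4*y) / 2 = c * x" "1/2 * x = x / 2"
      by (simp_all add: c_def)
    then have eq: "cosh (x * sqrt (1 + 4*y) / 2) / cosh (x / 2) * cosh (1/2 * x) = cosh (c * x)"
      by (simp only:) simp
    from sums_fps_mult[OF sums_even_egf_salie_poly[OF gf] sums_cosh_fps[of "1/2"] \<open>\<bar>x\<bar> < \<delta>\<close>]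
    show "(\<lambda>m. fps_nth (even_egf (\<lambda>n. poly (salie_poly s n) y) * cosh_fps (1/2)) m * x^m) sums cosh (c * x)"
      by (simp only: eq)
  qed (rule sums_cosh_fps)
  then have "(\<lambda>n. even_binomial_transform (\<lambda>j. poly (salie_poly s j) y) n / 4^n) = (\<lambda>n. c^(2*n))"
    unfolding even_egf_mult_cosh_half unfolding cosh_fps_def by (rule even_egf_inject)
  then have "even_binomial_transform (\<lambda>j. poly (salie_poly s j) y) n / 4^n = c^(2*n)"
    by (rule fun_cong)
  also have "c^(2*n) = (1 + 4*y)^n / 4^n"
    using \<open>1 + 4*y \<ge> 0\<close> by (simp add: c_def power_mult power_divide)
  finally show ?thesis by simp
qed

lemma salie_even_binomial_identity:
  assumes salie_gf: "\<exists>\<delta>>0. \<forall>x y. \<bar>x\<bar> < \<delta> \<and> \<bar>y\<bar> < \<delta> \<longrightarrow>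
      ((\<lambda>(n, k). x ^ (2 * n) / fact (2 * n) * s n k * y ^ k) has_sum
         (cosh (x * sqrt (1 + 4 * y) / 2) / cosh (x / 2))) {(n, k). k \<le> n}"
  shows "even_binomial_transform (\<lambda>j. poly (salie_poly s j) y) n = (1 + 4*y)^n"
proof -
  obtain \<delta> where "\<delta> > 0" and gf: "\<And>x y. \<bar>x\<bar> < \<delta> \<Longrightarrow> \<bar>y\<bar> < \<delta> \<Longrightarrow>
      ((\<lambda>(n, k). x^(2*n) / fact (2*n) * s n k * y^k) has_sum
         (cosh (x * sqrt (1 + 4*y) / 2) / cosh (x / 2))) {(n, k). k \<le> n}"
    using salie_gf by blast
  define d where "d = min \<delta> (1/4)"
  define p where "p = (\<Sum>j\<le>n. Polynomial.smult (real (2*n choose (2*j)) * 4^j) (salie_poly s j)) - [:1, 4:]^n"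
  have poly_p: "poly p y = even_binomial_transform (\<lambda>j. poly (salie_poly s j) y) n - (1 + 4*y)^n" for y
    by (simp add: p_def even_binomial_transform_def poly_sum mult.commute[of y 4])
  have "{-d<..<d} \<subseteq> {y. poly p y = 0}"
    using salie_identity_near_zero[OF gf \<open>\<delta> > 0\<close>] by (auto simp: poly_p d_def)
  moreover have "infinite {-d<..<d}"
    using \<open>\<delta> > 0\<close> unfolding infinite_Ioo_iff d_def by linarith
  ultimately have "p = 0"
    using poly_roots_finite finite_subset by blast
  then show ?thesis using poly_p[of y] by simp
qed

definition inverse_salie_coeff :: "nat \<Rightarrow> nat \<Rightarrow> real" where
  "inverse_salie_coeff i k = coeff ([:0, 1, 1:]^i) (2*k)"

lemma inverse_salie_coeff_eq:
  "inverse_salie_coeff i k = (if k \<le> i then real (i choose (2*(i - k))) else 0)"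
proof -
  have q: "[:0, 1, 1::real:] = monom 1 1 * [:1, 1:]"
    by (simp add: monom_Suc)
  have "[:0, 1, 1::real:]^i = monom 1 i * [:1, 1:]^i"
    unfolding q power_mult_distrib monom_power by simp
  then have "inverse_salie_coeff i k = (if 2*k < i then 0 else coeff ([:1, 1:]^i) (2*k - i))"
    by (simp add: inverse_salie_coeff_def coeff_monom_mult)
  also have "\<dots> = (if k \<le> i then real (i choose (2*(i - k))) else 0)"
  proof (cases "i \<le> 2*k \<and> k \<le> i")
    case True
    then have le: "2*k - i \<le> i" and "i - (2*k - i) = 2*(i - k)" by auto
    then have "i choose (2*k - i) = i choose (2*(i - k))"
      using binomial_symmetric by metis
    then show ?thesis using True le by (simp add: coeff_linear_poly_power_eq)
  next
    case False
    then show ?thesis by (auto simp: coeff_linear_poly_power_eq binomial_eq_0)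
  qed
  finally show ?thesis .
qed

lemma ME_entry:
  assumes "l < N" "j < N"
  shows "ME N $$ (l, j) = (-1)^(l + j) * 4^(l + 1) * inverse_salie_coeff (l + 1) (j + 1)"
proof (cases "j \<le> l")
  case True
  then have "(-1::real)^(l - j) = (-1)^(l + j)"
    by (simp add: neg_one_power_add_eq_neg_one_power_diff)
  with True assms show ?thesis
    by (simp add: ME_def inverse_salie_coeff_eq)
qed (use assms in \<open>simp add: ME_def inverse_salie_coeff_eq\<close>)

(* Using coeff rather than s makes the entries above the diagonal 0: s n k is unconstrained for k > n. *)
definition epsilon_mat :: "(nat \<Rightarrow> nat \<Rightarrow> real) \<Rightarrow> nat \<Rightarrow> real mat" where
  "epsilon_mat s N = mat N N (\<lambda>(i, j). \<bar>coeff (salie_poly s (i + 1)) (j + 1)\<bar> / 4^(j + 1))"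

locale salie_coefficients =
  fixes s :: "nat \<Rightarrow> nat \<Rightarrow> real"
  assumes salie_identity: "\<And>n y. even_binomial_transform (\<lambda>j. poly (salie_poly s j) y) n = (1 + 4*y)^n"
begin

lemma salie_poly_0: "salie_poly s 0 = 1"
proof -
  have "s 0 0 = 1"
    using salie_identity[of 0 0] by (simp add: even_binomial_transform_def poly_salie_poly)
  then show ?thesis by (simp add: salie_poly_def monom_0 one_pCons)
qed

lemma even_egf_salie_poly_mult_cosh_half:
  "even_egf (\<lambda>n. poly (salie_poly s n) y) * cosh_fps (1/2) = even_egf (\<lambda>n. (y + 1/4)^n)"
proof -
  have "(1 + 4*y)^n / 4^n = (y + 1/4)^n" for n
    by (simp add: field_simps flip: power_divide)
  then show ?thesis by (simp add: even_egf_mult_cosh_half salie_identity)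
qed

lemma poly_salie_poly_Suc:
  "poly (salie_poly s (Suc n)) y = y * poly (salie_poly s n) y -
     (\<Sum>a<n. fact (2*n) / fact (2*(n - a) - 1) * fps_nth tanh_half_fps (2*a + 1) *
        poly (salie_poly s (n - a)) y)"
proof -
  let ?t = "\<lambda>a. fps_nth tanh_half_fps (2*a + 1)" and ?P = "\<lambda>n. poly (salie_poly s n) y"
  have "?P (Suc n) / fact (2*n) = y * (?P n / fact (2*n)) - (\<Sum>a<n. ?t a * ?P (n - a) / fact (2*(n - a) - 1))"
    using arg_cong[OF cosh_half_quotient_ode[OF even_egf_salie_poly_mult_cosh_half],
        of "\<lambda>f. fps_nth f (2*n)"]
    by (simp add: fps_deriv_deriv_even_egf fps_nth_tanh_half_mult_deriv_even_egf)
  then have "?P (Suc n) = y * ?P n - fact (2*n) * (\<Sum>a<n. ?t a * ?P (n - a) / fact (2*(n - a) - 1))"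
    by (simp add: field_simps)
  then show ?thesis by (simp add: sum_distrib_left mult_ac)
qed

lemma salie_poly_Suc:
  "salie_poly s (Suc n) = pCons 0 (salie_poly s n) -
     (\<Sum>a<n. Polynomial.smult (fact (2*n) / fact (2*(n - a) - 1) * fps_nth tanh_half_fps (2*a + 1))
        (salie_poly s (n - a)))"
  by (intro poly_eq_poly_eq_iff[THEN iffD1] ext) (simp add: poly_salie_poly_Suc poly_sum)

lemma coeff_salie_poly_sign: "0 \<le> (-1)^(n + k) * coeff (salie_poly s n) k"
proof (induction n arbitrary: k rule: less_induct)
  case (less m)
  show ?case
  proof (cases m)
    case 0
    then show ?thesis by (simp add: salie_poly_0)
  next
    case (Suc n)
    let ?w = "\<lambda>a. fact (2*n) / fact (2*(n - a) - 1) * fps_nth tanh_half_fps (2*a + 1)"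
    have shift: "0 \<le> (-1)^(Suc n + k) * coeff (pCons 0 (salie_poly s n)) k"
      using less[of n] Suc by (cases k) auto
    have "0 \<le> (-1)^(n + k) * (?w a * coeff (salie_poly s (n - a)) k)" if "a < n" for a
    proof -
      have "(-1::real)^(n + k) = (-1)^a * (-1)^(n - a + k)"
        using that by (simp flip: power_add)
      then have eq: "(-1)^(n + k) * (?w a * coeff (salie_poly s (n - a)) k) =
          fact (2*n) / fact (2*(n - a) - 1) * (((-1)^a * fps_nth tanh_half_fps (2*a + 1)) *
            ((-1)^(n - a + k) * coeff (salie_poly s (n - a)) k))"
        by (simp only: mult_ac)
      have "0 \<le> (-1)^a * fps_nth tanh_half_fps (2*a + 1)"
        by (rule fps_nth_tanh_half_odd_sign)
      moreover have "0 \<le> (-1)^(n - a + k) * coeff (salie_poly s (n - a)) k"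
        using less[of "n - a"] Suc that by simp
      ultimately show ?thesis
        unfolding eq by (intro mult_nonneg_nonneg[OF _ mult_nonneg_nonneg]) simp_all
    qed
    then have "0 \<le> (\<Sum>a<n. (-1)^(n + k) * (?w a * coeff (salie_poly s (n - a)) k))"
      by (intro sum_nonneg) auto
    with shift show ?thesis
      unfolding Suc salie_poly_Suc by (simp add: coeff_sum sum_distrib_left algebra_simps sum_negf)
  qed
qed

lemma abs_coeff_salie_poly: "\<bar>coeff (salie_poly s n) k\<bar> = (-1)^(n + k) * coeff (salie_poly s n) k"
  by (rule abs_eq_neg_one_power_mult[OF coeff_salie_poly_sign])

lemma salie_sign:
  assumes "k \<le> n"
  shows "s n k = (-1)^(n - k) * \<bar>s n k\<bar>"
  using abs_coeff_salie_poly[of n k] assms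
  by (simp add: coeff_salie_poly neg_one_power_add_eq_neg_one_power_diff)

lemma coeff_salie_poly_0: "coeff (salie_poly s n) 0 = (if n = 0 then 1 else 0)"
proof -
  have "(\<lambda>j. coeff (salie_poly s j) 0) = (\<lambda>j. if j = 0 then 1 else 0)"
  proof (rule even_binomial_transform_inject)
    fix n
    show "even_binomial_transform (\<lambda>j. coeff (salie_poly s j) 0) n =
        even_binomial_transform (\<lambda>j. if j = 0 then 1 else 0) n"
      using salie_identity[where n=n and y=0] by (simp add: even_binomial_transform_delta poly_0_coeff_0)
  qed
  from fun_cong[OF this, of n] show ?thesis by simp
qed

lemma poly_salie_poly_minus_quarter:
  assumes "n \<ge> 1"
  shows "(-1)^n * poly (salie_poly s n) (-1/4) = (\<Sum>k=1..n. \<bar>s n k\<bar> / 4^k)"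
proof -
  have "poly (salie_poly s n) (-1/4) = (\<Sum>k\<le>n. coeff (salie_poly s n) k * (-1/4)^k)"
    by (simp add: poly_salie_poly coeff_salie_poly)
  also have "\<dots> = (\<Sum>k=1..n. coeff (salie_poly s n) k * (-1/4)^k)"
    using coeff_salie_poly_0[of n] assms by (simp add: atMost_atLeast0 sum.atLeast_Suc_atMost)
  also have "\<dots> = (\<Sum>k=1..n. (-1)^n * (\<bar>s n k\<bar> / 4^k))"
  proof (intro sum.cong refl)
    fix k assume k: "k \<in> {1..n}"
    have "(-1)^n * \<bar>s n k\<bar> = (-1)^k * s n k"
      using abs_coeff_salie_poly[of n k] k by (simp add: coeff_salie_poly power_add)
    then have "(-1)^n * (\<bar>s n k\<bar> / 4^k) = (-1)^k / 4^k * s n k"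
      by simp
    also have "(-1)^k / 4^k = (-1/4::real)^k"
      by (rule power_divide[symmetric])
    finally show "coeff (salie_poly s n) k * (-1/4)^k = (-1)^n * (\<bar>s n k\<bar> / 4^k)"
      using k by (simp add: coeff_salie_poly)
  qed
  finally have "poly (salie_poly s n) (-1/4) = (-1)^n * (\<Sum>k=1..n. \<bar>s n k\<bar> / 4^k)"
    by (simp add: sum_distrib_left)
  then show ?thesis by simp
qed

lemma poly_salie_poly_minus_quarter_eq:
  assumes "\<And>n. even_binomial_transform e n = 0^n"
  shows "poly (salie_poly s n) (-1/4) = e n"
proof -
  have "(\<lambda>j. poly (salie_poly s j) (-1/4)) = e"
    by (rule even_binomial_transform_inject) (simp add: salie_identity assms)
  from fun_cong[OF this, of n] show ?thesis by simp
qed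

lemma salie_inverse_relation:
  assumes "n \<le> m"
  shows "(\<Sum>i\<le>m. coeff (salie_poly s n) i * inverse_salie_coeff i k) = (if n = k then 1 else 0)"
proof -
  define X where "X j = (\<Sum>i\<le>j. Polynomial.smult (s j i) ([:0, 1, 1:]^i))" for j
  have coeff_X: "coeff (X j) (2*k) = (\<Sum>i\<le>j. coeff (salie_poly s j) i * inverse_salie_coeff i k)" for j
    by (simp add: X_def coeff_sum inverse_salie_coeff_def coeff_salie_poly)
  have poly_id: "(\<Sum>j\<le>n. Polynomial.smult (real (2*n choose (2*j)) * 4^j) (X j)) = [:1, 2:]^(2*n)" for n
  proof (intro poly_eq_poly_eq_iff[THEN iffD1] ext)
    fix w :: real
    have "poly (X j) w = poly (salie_poly s j) (w + w^2)" for j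
      by (simp add: X_def poly_salie_poly poly_sum algebra_simps power2_eq_square)
    then have "poly (\<Sum>j\<le>n. Polynomial.smult (real (2*n choose (2*j)) * 4^j) (X j)) w = (1 + 4*(w + w^2))^n"
      using salie_identity[where n=n and y="w + w^2"] by (simp add: poly_sum even_binomial_transform_def)
    also have "\<dots> = ((1 + 2*w)^2)^n"
      by (rule arg_cong[where f="\<lambda>z. z^n"]) (simp add: power2_eq_square algebra_simps)
    also have "\<dots> = poly ([:1, 2:]^(2*n)) w"
      by (simp add: poly_power mult.commute flip: power_mult)
    finally show "poly (\<Sum>j\<le>n. Polynomial.smult (real (2*n choose (2*j)) * 4^j) (X j)) w = poly ([:1, 2:]^(2*n)) w" .
  qed
  have "even_binomial_transform (\<lambda>j. coeff (X j) (2*k)) n =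
      even_binomial_transform (\<lambda>j. if j = k then 1 else 0) n" for n
  proof -
    have "even_binomial_transform (\<lambda>j. coeff (X j) (2*k)) n = coeff ([:1, 2:]^(2*n)) (2*k)"
      unfolding poly_id[of n, symmetric] by (simp add: even_binomial_transform_def coeff_sum)
    also have "\<dots> = (if k \<le> n then real (2*n choose (2*k)) * 2^(2*k) else 0)"
      by (simp only: coeff_linear_poly_power_eq) simp
    finally show ?thesis
      by (simp add: even_binomial_transform_delta power_mult)
  qed
  then have "(\<lambda>j. coeff (X j) (2*k)) = (\<lambda>j. if j = k then 1 else 0)"
    by (rule even_binomial_transform_inject)
  from fun_cong[OF this, of n] have "coeff (X n) (2*k) = (if n = k then 1 else 0)"
    by simp
  moreover have "(\<Sum>i\<le>m. coeff (salie_poly s n) i * inverse_salie_coeff i k) =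
      (\<Sum>i\<le>n. coeff (salie_poly s n) i * inverse_salie_coeff i k)"
    using assms by (intro sum.mono_neutral_right) (auto simp: coeff_salie_poly)
  ultimately show ?thesis by (simp add: coeff_X)
qed

lemma epsilon_mat_mult_ME: "epsilon_mat s N * ME N = 1\<^sub>m N"
proof (rule eq_matI)
  fix i j assume "i < dim_row (1\<^sub>m N :: real mat)" "j < dim_col (1\<^sub>m N :: real mat)"
  then have i: "i < N" and j: "j < N" by auto
  let ?c = "\<lambda>l. coeff (salie_poly s (Suc i)) l * inverse_salie_coeff l (Suc j)"
  have "(epsilon_mat s N * ME N) $$ (i, j) = (\<Sum>l<N. epsilon_mat s N $$ (i, l) * ME N $$ (l, j))"
    using i j by (simp add: epsilon_mat_def ME_def scalar_prod_def atLeast0LessThan)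
  also have "\<dots> = (\<Sum>l<N. (-1)^(i + j) * ?c (Suc l))"
  proof (intro sum.cong refl)
    fix l assume "l \<in> {..<N}"
    have "(-1::real)^(Suc i + Suc l) * (-1)^(l + j) = (-1)^(i + j)"
      by (simp add: power_add mult_ac flip: power2_eq_square power_mult)
    then show "epsilon_mat s N $$ (i, l) * ME N $$ (l, j) = (-1)^(i + j) * ?c (Suc l)"
      using i j \<open>l \<in> {..<N}\<close> abs_coeff_salie_poly[of "Suc i" "Suc l"]
      by (simp add: epsilon_mat_def ME_entry mult_ac)
  qed
  also have "\<dots> = (-1)^(i + j) * (\<Sum>l\<le>N. ?c l)"
  proof -
    have "(\<Sum>l\<le>N. ?c l) = ?c 0 + (\<Sum>l<N. ?c (Suc l))"
      unfolding lessThan_Suc_atMost[symmetric] by (rule sum.lessThan_Suc_shift)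
    then show ?thesis by (simp add: inverse_salie_coeff_eq sum_distrib_left)
  qed
  also have "\<dots> = (-1)^(i + j) * (if i = j then 1 else 0)"
    using salie_inverse_relation[of "Suc i" N "Suc j"] i by simp
  finally show "(epsilon_mat s N * ME N) $$ (i, j) = 1\<^sub>m N $$ (i, j)"
    using i j by simp
qed (simp_all add: epsilon_mat_def ME_def)

lemma ME_invertible: "invertible_mat (ME N)"
proof -
  have ME: "ME N \<in> carrier_mat N N" and eps: "epsilon_mat s N \<in> carrier_mat N N"
    by (simp_all add: ME_def epsilon_mat_def)
  have "ME N * epsilon_mat s N = 1\<^sub>m N"
    by (rule mat_mult_left_right_inverse[OF eps ME epsilon_mat_mult_ME])
  with epsilon_mat_mult_ME ME eps show ?thesis
    unfolding invertible_mat_def inverts_mat_def by (auto intro!: exI[of _ "epsilon_mat s N"])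
qed

lemma inverse_ME_eq_epsilon_mat:
  assumes "inverts_mat (ME N) B" and "inverts_mat B (ME N)"
  shows "B = epsilon_mat s N"
  by (rule inverts_mat_eq_left_inverse[OF _ _ epsilon_mat_mult_ME assms])
    (simp_all add: ME_def epsilon_mat_def)

end

theorem mainTheorem1:
  fixes s :: "nat \<Rightarrow> nat \<Rightarrow> real"
    and E :: "nat \<Rightarrow> real \<Rightarrow> real"
    and N :: nat
  assumes salie_gf: "\<exists>\<delta>>0. \<forall>x y. \<bar>x\<bar> < \<delta> \<and> \<bar>y\<bar> < \<delta> \<longrightarrow>
      ((\<lambda>(n, k). x ^ (2 * n) / fact (2 * n) * s n k * y ^ k) has_sum
         (cosh (x * sqrt (1 + 4 * y) / 2) / cosh (x / 2))) {(n, k). k \<le> n}"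
    and euler_gf: "\<forall>x. \<exists>\<delta>>0. \<forall>t. \<bar>t\<bar> < \<delta> \<longrightarrow>
      (\<lambda>m. E m x * t ^ m / fact m) sums (2 * exp (x * t) / (exp t + 1))"
    and N_pos: "N \<ge> 1"
  shows "(\<forall>n k. 1 \<le> k \<and> k \<le> n \<longrightarrow> s n k = (-1) ^ (n - k) * \<bar>s n k\<bar>)
    \<and> invertible_mat (ME N)
    \<and> (\<forall>B. inverts_mat (ME N) B \<and> inverts_mat B (ME N) \<longrightarrow>
         (\<forall>n k. 1 \<le> k \<and> k \<le> n \<and> n \<le> N \<longrightarrow>
            B $$ (n - 1, k - 1) = \<bar>s n k\<bar> / 4 ^ k))
    \<and> (\<forall>n \<ge> 1. \<bar>E (2 * n) (1 / 2)\<bar> = (-1) ^ n * E (2 * n) (1 / 2)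
         \<and> (-1) ^ n * E (2 * n) (1 / 2) = (\<Sum>k = 1..n. \<bar>s n k\<bar> / 4 ^ k))"
proof -
  interpret salie_coefficients s
    by unfold_locales (rule salie_even_binomial_identity[OF salie_gf])
  have B: "B $$ (n - 1, k - 1) = \<bar>s n k\<bar> / 4^k"
    if "inverts_mat (ME N) B" "inverts_mat B (ME N)" "1 \<le> k" "k \<le> n" "n \<le> N" for B n k
    using inverse_ME_eq_epsilon_mat[OF that(1,2)] that(3-5)
    by (cases n; cases k) (simp_all add: epsilon_mat_def coeff_salie_poly)
  have E_half: "(-1)^n * E (2*n) (1/2) = (\<Sum>k=1..n. \<bar>s n k\<bar> / 4^k)" if "n \<ge> 1" for n
  proof -
    obtain d where "d > 0" and "\<And>t. \<bar>t\<bar> < d \<Longrightarrow>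
        (\<lambda>m. E m (1/2) * t^m / fact m) sums (2 * exp (1/2 * t) / (exp t + 1))"
      using euler_gf by blast
    from poly_salie_poly_minus_quarter_eq[OF euler_even_binomial_identity[OF this]]
    show ?thesis using poly_salie_poly_minus_quarter[OF that] by simp
  qed
  have E_abs: "\<bar>E (2*n) (1/2)\<bar> = (-1)^n * E (2*n) (1/2)" if "n \<ge> 1" for n
    using E_half[OF that] by (intro abs_eq_neg_one_power_mult) (simp add: sum_nonneg)
  show ?thesis
    using salie_sign ME_invertible B E_half E_abs by auto
qed

end
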